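(* For all integers $n\ge 3$ and $0\le r\le n$, $$N_0^{n,r}=\frac{2}{n-1}\binom{n-1}{r}\binom{n-1}{n-r}\quad\text{and}\quad N_1^{n,r}=2N_0^{n,r}.$$
   Context: A lattice path from $(0,0)$ to $(r,n-r)$ (with integers $n\ge 1$, $0\le r\le n$) is a sequence of lattice points $v_0=(0,0),v_1,\dots,v_n=(r,n-r)$ with each step $v_i-v_{i-1}\in\{(1,0),(0,1)\}$ (an E step or an N step); its vertex set is $\{v_0,\dots,v_n\}$. For $k\ge 0$, $N_k^{n,r}$ denotes the number of ordered pairs $(P,Q)$ of lattice paths from $(0,0)$ to $(r,n-r)$ such that the intersection of their vertex sets, with the two points $(0,0)$ and $(r,n-r)$ removed, has exactly $k$ elements. Binomial coefficients $\binom{a}{b}$ with $a\ge 0$ are $0$ if $b<0$ or $b>a$. *)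

theory Defs
  imports Complex_Main
begin

definition lattice_path :: "nat \<Rightarrow> nat \<Rightarrow> (nat \<times> nat) list \<Rightarrow> bool" where
  "lattice_path n r P \<longleftrightarrow>
     length P = Suc n \<and> P ! 0 = (0, 0) \<and> P ! n = (r, n - r) \<and>
     (\<forall>i. 1 \<le> i \<and> i \<le> n \<longrightarrow>
        P ! i = (fst (P ! (i - 1)) + 1, snd (P ! (i - 1))) \<or>
        P ! i = (fst (P ! (i - 1)), snd (P ! (i - 1)) + 1))"

definition Npairs :: "nat \<Rightarrow> nat \<Rightarrow> nat \<Rightarrow> nat" where
  "Npairs k n r = card {(P, Q). lattice_path n r P \<and> lattice_path n r Q \<and>
       card ((set P \<inter> set Q) - {(0, 0), (r, n - r)}) = k}"

end

theory Submission
  imports Defs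
begin

(* Encode a path by its word of steps. The number of pairs of words of length m with a and b east
   steps whose vertices coincide at exactly k of the positions 1..m satisfies a four-term recursion
   in the last steps, where k drops by one when a = b because the words then meet at the end.
   For k = 0 the solution is a Lindstrom-Gessel-Viennot determinant of binomial coefficients, for
   k = 1 another bilinear form in binomial coefficients; both are checked against the recursion by
   Pascal's rule. N_0 is the k = 1 count on the diagonal a = b = r, which is twice a Narayana number.
   N_1 is the k = 2 count, which the recursion writes as a sum of k = 1 counts one step shorter, and
   Pascal's rule turns that sum into 2 N_0. *)

definition east_steps :: "bool list \<Rightarrow> nat" where
  "east_steps w = length (filter id w)"

definition vertex :: "bool list \<Rightarrow> nat \<Rightarrow> nat \<times> nat" where
  "vertex w i = (east_steps (take i w), i - east_steps (take i w))"

definition vertices :: "bool list \<Rightarrow> (nat \<times> nat) list" where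
  "vertices w = map (vertex w) [0..<Suc (length w)]"

lemma east_steps_take_le: "east_steps (take i w) \<le> i"
  unfolding east_steps_def using length_filter_le[of id "take i w"] by simp

lemma east_steps_snoc [simp]: "east_steps (w @ [x]) = east_steps w + of_bool x"
  unfolding east_steps_def by simp

lemma vertex_0 [simp]: "vertex w 0 = (0, 0)"
  unfolding vertex_def east_steps_def by simp

lemma vertex_length: "vertex w (length w) = (east_steps w, length w - east_steps w)"
  unfolding vertex_def by simp

lemma vertex_append: "i \<le> length u \<Longrightarrow> vertex (u @ v) i = vertex u i"
  unfolding vertex_def by simp

lemma fst_add_snd_vertex: "fst (vertex w i) + snd (vertex w i) = i"
  unfolding vertex_def using east_steps_take_le[of i w] by simp

lemma vertex_Suc:
  assumes "i < length w"
  shows "vertex w (Suc i) =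
    (if w ! i then (fst (vertex w i) + 1, snd (vertex w i)) else (fst (vertex w i), snd (vertex w i) + 1))"
  using assms east_steps_take_le[of i w]
  by (simp add: vertex_def east_steps_def take_Suc_conv_app_nth Suc_diff_le)

lemma nth_iff_vertex_Suc:
  "i < length w \<Longrightarrow> w ! i \<longleftrightarrow> fst (vertex w (Suc i)) \<noteq> fst (vertex w i)"
  by (simp add: vertex_Suc)

lemma length_vertices [simp]: "length (vertices w) = Suc (length w)"
  unfolding vertices_def by simp

lemma nth_vertices: "i \<le> length w \<Longrightarrow> vertices w ! i = vertex w i"
  unfolding vertices_def by (simp del: upt_Suc add: nth_map_upt)

lemma set_vertices: "set (vertices w) = vertex w ` {..length w}"
  unfolding vertices_def set_map set_upt atLeastLessThanSuc_atLeastAtMost atLeast0AtMost ..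

lemma lattice_path_vertices: "lattice_path (length w) (east_steps w) (vertices w)"
  unfolding lattice_path_def
proof (intro conjI allI impI)
  fix i assume "1 \<le> i \<and> i \<le> length w"
  then obtain j where "i = Suc j" "j < length w" by (cases i) auto
  then show "vertices w ! i = (fst (vertices w ! (i - 1)) + 1, snd (vertices w ! (i - 1))) \<or>
             vertices w ! i = (fst (vertices w ! (i - 1)), snd (vertices w ! (i - 1)) + 1)"
    by (simp add: nth_vertices vertex_Suc)
qed (simp_all add: nth_vertices vertex_length)

lemma lattice_path_imp_vertices:
  assumes "lattice_path n r P"
  obtains w where "length w = n" "east_steps w = r" "P = vertices w"
proof -
  define w where "w = map (\<lambda>j. fst (P ! Suc j) \<noteq> fst (P ! j)) [0..<n]"
  have len: "length P = Suc n" and P0: "P ! 0 = (0, 0)" and Pn: "P ! n = (r, n - r)"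
    and step: "\<And>i. 1 \<le> i \<Longrightarrow> i \<le> n \<Longrightarrow> P ! i = (fst (P ! (i - 1)) + 1, snd (P ! (i - 1))) \<or>
                                     P ! i = (fst (P ! (i - 1)), snd (P ! (i - 1)) + 1)"
    using assms unfolding lattice_path_def by auto
  have P_vertex: "P ! i = vertex w i" if "i \<le> n" for i
    using that
  proof (induction i)
    case 0
    show ?case using P0 by simp
  next
    case (Suc j)
    then have "P ! j = vertex w j" "j < length w" by (simp_all add: w_def)
    then show ?case using step[of "Suc j"] Suc.prems by (auto simp: vertex_Suc w_def)
  qed
  have "length w = n" by (simp add: w_def)
  moreover have "east_steps w = r" using P_vertex[of n] Pn vertex_length[of w] by (simp add: w_def)
  moreover have "P = vertices w"
    by (rule nth_equalityI) (simp_all add: len nth_vertices P_vertex w_def)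
  ultimately show thesis by (rule that)
qed

lemma inj_vertices: "inj vertices"
proof (rule injI)
  fix u v assume eq: "vertices u = vertices v"
  then have len: "length u = length v" by (metis length_vertices nat.inject)
  have "vertex u i = vertex v i" if "i \<le> length u" for i
    using eq that len by (metis nth_vertices)
  then show "u = v" using len by (auto intro: nth_equalityI simp: nth_iff_vertex_Suc)
qed

lemma vertex_eq_imp_index_eq: "vertex u i = vertex v j \<Longrightarrow> i = j"
  by (metis fst_add_snd_vertex)

lemma inj_vertex: "inj (vertex w)"
  by (rule injI) (rule vertex_eq_imp_index_eq)

definition meetings :: "bool list \<Rightarrow> bool list \<Rightarrow> nat" where
  "meetings u v = card {i \<in> {1..length u}. vertex u i = vertex v i}"

lemma meetings_eq_Suc_card_common_interior:
  assumes "length u = n" "length v = n" "east_steps u = r" "east_steps v = r" "1 \<le> n"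
  shows "meetings u v = Suc (card (set (vertices u) \<inter> set (vertices v) - {(0, 0), (r, n - r)}))"
proof -
  let ?J = "{i. i \<le> n \<and> vertex u i = vertex v i}"
  have common: "set (vertices u) \<inter> set (vertices v) = vertex u ` ?J"
  proof (intro equalityI subsetI)
    fix z assume "z \<in> set (vertices u) \<inter> set (vertices v)"
    then obtain i j where "i \<le> n" "z = vertex u i" "z = vertex v j"
      using assms(1,2) by (auto simp: set_vertices)
    then show "z \<in> vertex u ` ?J"
      using vertex_eq_imp_index_eq by blast
  next
    fix z assume "z \<in> vertex u ` ?J"
    then obtain i where "i \<le> n" "z = vertex u i" "z = vertex v i" by blast
    then show "z \<in> set (vertices u) \<inter> set (vertices v)"
      using assms(1,2) unfolding set_vertices by (metis IntI atMost_iff imageI)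
  qed
  have ends: "{(0, 0), (r, n - r)} = vertex u ` {0, n}"
    using assms(1,3) vertex_length[of u] by simp
  have "set (vertices u) \<inter> set (vertices v) - {(0, 0), (r, n - r)} = vertex u ` (?J - {0, n})"
    unfolding common ends image_set_diff[OF inj_vertex] ..
  moreover have "{i \<in> {1..length u}. vertex u i = vertex v i} = insert n (?J - {0, n})"
    using assms vertex_length[of u] vertex_length[of v] by auto
  ultimately show ?thesis
    unfolding meetings_def by (simp add: card_image inj_on_subset[OF inj_vertex])
qed

lemma meetings_snoc:
  assumes "length u = length v"
  shows "meetings (u @ [x]) (v @ [y]) =
         meetings u v + of_bool (east_steps (u @ [x]) = east_steps (v @ [y]))"
proof -
  have "{i \<in> {1..length (u @ [x])}. vertex (u @ [x]) i = vertex (v @ [y]) i} =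
        {i \<in> {1..length u}. vertex u i = vertex v i} \<union>
        (if east_steps (u @ [x]) = east_steps (v @ [y]) then {Suc (length u)} else {})"
    using assms vertex_length[of "u @ [x]"] vertex_length[of "v @ [y]"]
    by (auto simp: le_Suc_eq vertex_append simp del: east_steps_snoc)
  then show ?thesis unfolding meetings_def by (simp add: card_insert_if del: east_steps_snoc)
qed

text \<open>Integer endpoints let the recursion on the last steps reach \<open>-1\<close> without truncated
  subtraction.\<close>

definition word_pairs :: "nat \<Rightarrow> int \<Rightarrow> int \<Rightarrow> nat \<Rightarrow> (bool list \<times> bool list) set" where
  "word_pairs m a b k = {(u, v). length u = m \<and> length v = m \<and>
     int (east_steps u) = a \<and> int (east_steps v) = b \<and> meetings u v = k}"

lemma finite_word_pairs: "finite (word_pairs m a b k)"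
proof (rule finite_subset)
  show "word_pairs m a b k \<subseteq> {u. length u = m} \<times> {v. length v = m}"
    unfolding word_pairs_def by auto
  have "finite {u :: bool list. length u = m}"
    using finite_lists_length_eq[of "UNIV :: bool set" m] by simp
  then show "finite ({u :: bool list. length u = m} \<times> {v :: bool list. length v = m})"
    by (intro finite_cartesian_product)
qed

lemma Npairs_eq_card_word_pairs:
  assumes "1 \<le> n"
  shows "Npairs k n r = card (word_pairs n (int r) (int r) (Suc k))"
proof -
  have "{(P, Q). lattice_path n r P \<and> lattice_path n r Q \<and>
           card (set P \<inter> set Q - {(0, 0), (r, n - r)}) = k} =
        map_prod vertices vertices ` word_pairs n (int r) (int r) (Suc k)"
  proof (intro equalityI subsetI)
    fix z assume "z \<in> {(P, Q). lattice_path n r P \<and> lattice_path n r Q \<and>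
                             card (set P \<inter> set Q - {(0, 0), (r, n - r)}) = k}"
    then obtain P Q where z: "z = (P, Q)" "lattice_path n r P" "lattice_path n r Q"
      and card: "card (set P \<inter> set Q - {(0, 0), (r, n - r)}) = k" by blast
    obtain u where u: "length u = n" "east_steps u = r" "P = vertices u"
      using lattice_path_imp_vertices[OF z(2)] .
    obtain v where v: "length v = n" "east_steps v = r" "Q = vertices v"
      using lattice_path_imp_vertices[OF z(3)] .
    have "(u, v) \<in> word_pairs n (int r) (int r) (Suc k)"
      using meetings_eq_Suc_card_common_interior[OF u(1) v(1) u(2) v(2) assms] card u v
      by (simp add: word_pairs_def)
    then show "z \<in> map_prod vertices vertices ` word_pairs n (int r) (int r) (Suc k)"
      using z(1) u(3) v(3) by force
  next
    fix z assume "z \<in> map_prod vertices vertices ` word_pairs n (int r) (int r) (Suc k)"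
    then obtain u v where z: "z = (vertices u, vertices v)"
      and u: "length u = n" "east_steps u = r" and v: "length v = n" "east_steps v = r"
      and meet: "meetings u v = Suc k"
      by (auto simp: word_pairs_def)
    have "lattice_path n r (vertices u)" "lattice_path n r (vertices v)"
      using lattice_path_vertices[of u] lattice_path_vertices[of v] u v by simp_all
    then show "z \<in> {(P, Q). lattice_path n r P \<and> lattice_path n r Q \<and>
                        card (set P \<inter> set Q - {(0, 0), (r, n - r)}) = k}"
      using meetings_eq_Suc_card_common_interior[OF u(1) v(1) u(2) v(2) assms] meet z by simp
  qed
  moreover have "inj (map_prod vertices vertices)"
    using map_prod_inj_on[OF inj_vertices inj_vertices] by simp
  ultimately show ?thesis
    unfolding Npairs_def by (simp add: card_image inj_on_subset)
qed

lemma snoc_in_word_pairs_iff: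
  assumes "\<not> (a = b \<and> k = 0)"
  shows "(u @ [x], v @ [y]) \<in> word_pairs (Suc m) a b k \<longleftrightarrow>
         (u, v) \<in> word_pairs m (a - of_bool x) (b - of_bool y) (k - of_bool (a = b))"
  using assms meetings_snoc[of u v x y] by (auto simp: word_pairs_def)

lemma word_pairs_Suc_diag_0: "word_pairs (Suc m) a a 0 = {}"
proof -
  have "meetings U V \<noteq> 0" if "length U = Suc m" "length V = Suc m" "east_steps U = east_steps V" for U V
  proof -
    obtain u x v y where "U = u @ [x]" "V = v @ [y]" "length u = length v"
      using \<open>length U = Suc m\<close> \<open>length V = Suc m\<close> by (auto simp: length_Suc_conv_rev)
    then show ?thesis using that meetings_snoc[of u v x y] by simp
  qed
  then show ?thesis unfolding word_pairs_def by auto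
qed

lemma card_word_pairs_Suc:
  assumes "\<not> (a = b \<and> k = 0)"
  shows "card (word_pairs (Suc m) a b k) =
    (\<Sum>(x, y)\<in>UNIV. card (word_pairs m (a - of_bool x) (b - of_bool y) (k - of_bool (a = b))))"
proof -
  define W where "W = (\<lambda>(x, y). word_pairs m (a - of_bool x) (b - of_bool y) (k - of_bool (a = b)))"
  define snoc :: "(bool \<times> bool) \<times> bool list \<times> bool list \<Rightarrow> bool list \<times> bool list"
    where "snoc = (\<lambda>((x, y), (u, v)). (u @ [x], v @ [y]))"
  have "word_pairs (Suc m) a b k = snoc ` Sigma UNIV W"
  proof (intro equalityI subsetI)
    fix z assume z: "z \<in> word_pairs (Suc m) a b k"
    then obtain u x v y where "z = (u @ [x], v @ [y])"
      unfolding word_pairs_def by (auto simp: length_Suc_conv_rev)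
    then show "z \<in> snoc ` Sigma UNIV W"
      using z snoc_in_word_pairs_iff[OF assms] unfolding snoc_def W_def by force
  qed (use snoc_in_word_pairs_iff[OF assms] in \<open>auto simp: snoc_def W_def\<close>)
  moreover have "inj snoc" by (rule injI) (auto simp: snoc_def)
  ultimately have "card (word_pairs (Suc m) a b k) = card (Sigma UNIV W)"
    by (simp add: card_image inj_on_subset)
  then show ?thesis by (simp add: W_def finite_word_pairs case_prod_beta)
qed

fun pair_count :: "nat \<Rightarrow> int \<Rightarrow> int \<Rightarrow> nat \<Rightarrow> nat" where
  "pair_count 0 a b k = of_bool (a = 0 \<and> b = 0 \<and> k = 0)"
| "pair_count (Suc m) a b k =
     (if a = b \<and> k = 0 then 0 else
      let k' = k - of_bool (a = b) in
      pair_count m (a - 1) (b - 1) k' + pair_count m (a - 1) b k' + pair_count m a (b - 1) k' + pair_count m a b k')"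

declare pair_count.simps(2) [simp del]

lemma pair_count_Suc_diag_0: "pair_count (Suc m) a a 0 = 0"
  by (simp add: pair_count.simps(2))

lemma pair_count_Suc_neq:
  "a \<noteq> b \<Longrightarrow> pair_count (Suc m) a b k =
     pair_count m (a - 1) (b - 1) k + pair_count m (a - 1) b k + pair_count m a (b - 1) k + pair_count m a b k"
  by (simp add: pair_count.simps(2))

lemma pair_count_Suc_diag:
  "pair_count (Suc m) a a (Suc k) =
     pair_count m (a - 1) (a - 1) k + pair_count m (a - 1) a k + pair_count m a (a - 1) k + pair_count m a a k"
  by (simp add: pair_count.simps(2))

lemma pair_count_commute: "pair_count m a b k = pair_count m b a k"
  by (induction m arbitrary: a b k) (auto simp: pair_count.simps(2) Let_def)

lemma sum_UNIV_bool_pair: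
  "(\<Sum>(x, y)\<in>UNIV. f x y) = f True True + f True False + f False True + f False False"
  for f :: "bool \<Rightarrow> bool \<Rightarrow> 'a::comm_monoid_add"
  by (simp flip: UNIV_Times_UNIV sum.cartesian_product add: UNIV_bool algebra_simps)

lemma card_word_pairs: "card (word_pairs m a b k) = pair_count m a b k"
proof (induction m arbitrary: a b k)
  case 0
  have "meetings [] [] = 0" by (simp add: meetings_def)
  then have "word_pairs 0 a b k = (if a = 0 \<and> b = 0 \<and> k = 0 then {([], [])} else {})"
    by (auto simp: word_pairs_def east_steps_def)
  then show ?case by simp
next
  case (Suc m)
  show ?case
  proof (cases "a = b \<and> k = 0")
    case True
    then show ?thesis by (simp add: word_pairs_Suc_diag_0 pair_count_Suc_diag_0)
  next
    case False
    show ?thesis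
      unfolding card_word_pairs_Suc[OF False] sum_UNIV_bool_pair Suc.IH
        pair_count.simps(2) if_not_P[OF False]
      by (simp add: Let_def)
  qed
qed

definition choose_int :: "nat \<Rightarrow> int \<Rightarrow> int" where
  "choose_int p j = (if j < 0 then 0 else int (p choose nat j))"

lemma choose_int_0 [simp]: "choose_int 0 j = of_bool (j = 0)"
  by (auto simp: choose_int_def)

lemma choose_int_eq_0: "j < 0 \<or> j > int p \<Longrightarrow> choose_int p j = 0"
  by (auto simp: choose_int_def)

lemma choose_int_Suc: "choose_int (Suc p) j = choose_int p j + choose_int p (j - 1)"
proof (cases "j > 0")
  case True
  then have "nat j = Suc (nat (j - 1))" by simp
  then show ?thesis using True by (simp add: choose_int_def)
qed (auto simp: choose_int_def)

lemma narayana_choose_int: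
  "int (Suc p) * (choose_int p j ^ 2 - choose_int p (j + 1) * choose_int p (j - 1)) =
   choose_int (Suc p) (j + 1) * choose_int (Suc p) j"
proof (cases "0 \<le> j \<and> j \<le> int p")
  case True
  then obtain s where j: "j = int s" and "s \<le> p" by (metis nat_eq_iff2 nat_le_iff)
  define c x y X Y where "c = choose_int p j" and "x = choose_int p (j + 1)"
    and "y = choose_int p (j - 1)" and "X = choose_int (Suc p) (j + 1)" and "Y = choose_int (Suc p) j"
  have "int (Suc s) * X = int (Suc s * (Suc p choose Suc s))"
    unfolding X_def choose_int_def j by (simp add: nat_add_distrib algebra_simps del: binomial_Suc_Suc)
  also have "\<dots> = int (Suc p) * c"
    unfolding Suc_times_binomial c_def choose_int_def j by (simp add: algebra_simps)
  finally have absorb_X: "int (Suc s) * X = int (Suc p) * c" .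
  have "int (Suc p - s) * Y = int ((Suc p - s) * (Suc p choose s))"
    unfolding Y_def choose_int_def j by simp
  also have "\<dots> = int (Suc p) * c"
    unfolding binomial_absorb_comp c_def choose_int_def j by (simp add: algebra_simps)
  finally have absorb_Y: "int (Suc p - s) * Y = int (Suc p) * c" .
  have pascal: "X = x + c" "Y = c + y"
    unfolding X_def Y_def x_def y_def c_def by (simp_all add: choose_int_Suc)
  have sum: "int (Suc s) + int (Suc p - s) = int (Suc p) + 1" using \<open>s \<le> p\<close> by simp
  have "int (Suc s) * int (Suc p - s) * (int (Suc p) * (c ^ 2 - x * y) - X * Y) = 0"
    using absorb_X absorb_Y pascal sum by algebra
  then show ?thesis using \<open>s \<le> p\<close> unfolding c_def x_def y_def X_def Y_def by simp
next
  case False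
  then show ?thesis by (auto simp: choose_int_eq_0)
qed

text \<open>Two words of length \<open>q + 1\<close> that never meet start with different steps, so they are
  counted by the Lindstrom-Gessel-Viennot determinant for paths from \<open>(1, 0)\<close> and \<open>(0, 1)\<close>.\<close>

definition no_meeting_formula :: "nat \<Rightarrow> int \<Rightarrow> int \<Rightarrow> int" where
  "no_meeting_formula q a b =
     choose_int q (a - 1) * choose_int q b - choose_int q a * choose_int q (b - 1)"

definition one_meeting_formula :: "nat \<Rightarrow> int \<Rightarrow> int \<Rightarrow> int" where
  "one_meeting_formula p a b =
     choose_int p (a - 2) * choose_int p (b - 1) - choose_int p (a - 1) * choose_int p (b - 2)
     + 2 * choose_int p (a - 1) * choose_int p (b - 1) + choose_int p (a - 1) * choose_int p b
     - 2 * choose_int p a * choose_int p (b - 2) - choose_int p a * choose_int p (b - 1)"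

lemma no_meeting_formula_Suc:
  "no_meeting_formula (Suc q) a b =
     no_meeting_formula q (a - 1) (b - 1) + no_meeting_formula q (a - 1) b +
     no_meeting_formula q a (b - 1) + no_meeting_formula q a b"
  unfolding no_meeting_formula_def choose_int_Suc by (simp add: diff_diff_eq algebra_simps)

lemma one_meeting_formula_Suc:
  "one_meeting_formula (Suc p) a b =
     one_meeting_formula p (a - 1) (b - 1) + one_meeting_formula p (a - 1) b +
     one_meeting_formula p a (b - 1) + one_meeting_formula p a b"
  unfolding one_meeting_formula_def choose_int_Suc by (simp add: diff_diff_eq algebra_simps)

lemma no_meeting_formula_diag: "no_meeting_formula q a a = 0"
  unfolding no_meeting_formula_def by simp

lemma one_meeting_formula_Suc_diag_eq_no_meeting:
  "one_meeting_formula (Suc p) a a = 2 * no_meeting_formula (Suc p) a (a - 1)"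
  unfolding one_meeting_formula_def no_meeting_formula_def choose_int_Suc
  by (simp add: diff_diff_eq algebra_simps)

lemma one_meeting_formula_diag:
  "one_meeting_formula p a a = 2 * (choose_int p (a - 1) ^ 2 - choose_int p a * choose_int p (a - 2))"
  unfolding one_meeting_formula_def by (simp add: power2_eq_square algebra_simps)

lemma one_meeting_formula_last_step_sum:
  "one_meeting_formula q (a - 1) (a - 1) + 2 * one_meeting_formula q a (a - 1) + one_meeting_formula q a a =
   2 * one_meeting_formula (Suc q) a a"
  unfolding one_meeting_formula_def choose_int_Suc by (simp add: diff_diff_eq algebra_simps)

lemma pair_count_no_meeting:
  "b \<le> a \<Longrightarrow> int (pair_count (Suc q) a b 0) = no_meeting_formula q a b"
proof (induction q arbitrary: a b)
  case 0
  then show ?case by (auto simp: no_meeting_formula_def pair_count.simps(2))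
next
  case (Suc q)
  show ?case
  proof (cases "a = b")
    case True
    then show ?thesis by (simp add: pair_count_Suc_diag_0 no_meeting_formula_diag)
  next
    case False
    then show ?thesis
      using Suc.prems Suc.IH[of "b - 1" "a - 1"] Suc.IH[of b "a - 1"] Suc.IH[of "b - 1" a] Suc.IH[of b a]
      by (simp add: pair_count_Suc_neq[OF False] no_meeting_formula_Suc)
  qed
qed

lemma pair_count_one_meeting:
  "b \<le> a \<Longrightarrow> int (pair_count (Suc (Suc p)) a b 1) = one_meeting_formula p a b"
proof (induction p arbitrary: a b)
  case 0
  then show ?case by (auto simp: one_meeting_formula_def pair_count.simps(2) Let_def)
next
  case (Suc p)
  show ?case
  proof (cases "a = b")
    case True
    have "int (pair_count (Suc (Suc p)) (a - 1) a 0) = no_meeting_formula (Suc p) a (a - 1)"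
      using pair_count_no_meeting[of "a - 1" a "Suc p"] pair_count_commute by simp
    then show ?thesis
      using True pair_count_Suc_diag[of "Suc (Suc p)" a 0] pair_count_commute[of _ a "a - 1"]
      by (simp add: pair_count_Suc_diag_0 one_meeting_formula_Suc_diag_eq_no_meeting)
  next
    case False
    then show ?thesis
      using Suc.prems Suc.IH[of "b - 1" "a - 1"] Suc.IH[of b "a - 1"] Suc.IH[of "b - 1" a] Suc.IH[of b a]
      by (simp add: pair_count_Suc_neq[OF False] one_meeting_formula_Suc)
  qed
qed

lemma one_meeting_formula_diag_eq_narayana:
  assumes "r \<le> Suc (Suc p)"
  shows "real_of_int (one_meeting_formula p (int r) (int r)) =
         2 / real (Suc p) * real (Suc p choose r) * real (Suc p choose (Suc (Suc p) - r))"
proof -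
  have "int (Suc p choose (Suc (Suc p) - r)) = choose_int (Suc p) (int r - 1)"
  proof (cases r)
    case (Suc s)
    then show ?thesis using assms binomial_symmetric[of s "Suc p"] by (simp add: choose_int_def)
  qed (simp add: choose_int_def binomial_eq_0 del: binomial_Suc_Suc)
  then have binomials: "int (Suc p choose r) * int (Suc p choose (Suc (Suc p) - r)) =
                        choose_int (Suc p) (int r) * choose_int (Suc p) (int r - 1)"
    by (simp add: choose_int_def)
  have "int (Suc p) * (choose_int p (int r - 1) ^ 2 - choose_int p (int r) * choose_int p (int r - 2)) =
        choose_int (Suc p) (int r) * choose_int (Suc p) (int r - 1)"
    using narayana_choose_int[of p "int r - 1"] by simp
  then have "int (Suc p) * one_meeting_formula p (int r) (int r) =
             2 * (int (Suc p choose r) * int (Suc p choose (Suc (Suc p) - r)))"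
    unfolding one_meeting_formula_diag binomials by algebra
  then have "real (Suc p) * real_of_int (one_meeting_formula p (int r) (int r)) =
             2 * (real (Suc p choose r) * real (Suc p choose (Suc (Suc p) - r)))"
    by (metis of_int_mult of_int_numeral of_int_of_nat_eq)
  then show ?thesis
    by (simp add: field_simps del: of_nat_Suc)
qed

lemma Npairs_0_eq_one_meeting_formula:
  "int (Npairs 0 (Suc (Suc p)) r) = one_meeting_formula p (int r) (int r)"
  using Npairs_eq_card_word_pairs[of "Suc (Suc p)" 0 r] card_word_pairs
    pair_count_one_meeting[of "int r" "int r" p]
  by simp

lemma Npairs_1_eq_one_meeting_formula:
  "int (Npairs 1 (Suc (Suc (Suc q))) r) = 2 * one_meeting_formula (Suc q) (int r) (int r)"
proof -
  let ?c = "\<lambda>a b. int (pair_count (Suc (Suc q)) a b 1)"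
  have diag: "?c (int r - 1) (int r - 1) = one_meeting_formula q (int r - 1) (int r - 1)"
    and below: "?c (int r) (int r - 1) = one_meeting_formula q (int r) (int r - 1)"
    and corner: "?c (int r) (int r) = one_meeting_formula q (int r) (int r)"
    using pair_count_one_meeting[of "int r - 1" "int r - 1" q] pair_count_one_meeting[of "int r - 1" "int r" q]
      pair_count_one_meeting[of "int r" "int r" q]
    by simp_all
  have above: "?c (int r - 1) (int r) = one_meeting_formula q (int r) (int r - 1)"
    unfolding pair_count_commute[of _ "int r - 1" "int r"] by (rule below)
  have "Npairs 1 (Suc (Suc (Suc q))) r = pair_count (Suc (Suc (Suc q))) (int r) (int r) (Suc 1)"
    by (simp add: Npairs_eq_card_word_pairs card_word_pairs)
  then have "int (Npairs 1 (Suc (Suc (Suc q))) r) =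
             ?c (int r - 1) (int r - 1) + ?c (int r - 1) (int r) + ?c (int r) (int r - 1) + ?c (int r) (int r)"
    unfolding pair_count_Suc_diag by simp
  also have "\<dots> = one_meeting_formula q (int r - 1) (int r - 1)
                    + 2 * one_meeting_formula q (int r) (int r - 1) + one_meeting_formula q (int r) (int r)"
    unfolding diag below above corner by simp
  also have "\<dots> = 2 * one_meeting_formula (Suc q) (int r) (int r)"
    by (rule one_meeting_formula_last_step_sum)
  finally show ?thesis .
qed

theorem mainTheorem5:
  fixes n r :: nat
  assumes "n \<ge> 3" and "r \<le> n"
  shows "real (Npairs 0 n r) = 2 / real (n - 1) * real ((n - 1) choose r) * real ((n - 1) choose (n - r))
         \<and> Npairs 1 n r = 2 * Npairs 0 n r"
proof -
  obtain q where n: "n = Suc (Suc (Suc q))"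
    using le_Suc_ex[OF assms(1)] by auto
  have "real (Npairs 0 n r) = real_of_int (one_meeting_formula (Suc q) (int r) (int r))"
    using Npairs_0_eq_one_meeting_formula[of "Suc q" r] unfolding n by (metis of_int_of_nat_eq)
  also have "\<dots> = 2 / real (n - 1) * real ((n - 1) choose r) * real ((n - 1) choose (n - r))"
    using one_meeting_formula_diag_eq_narayana[of r "Suc q"] assms(2) n by simp
  moreover have "int (Npairs 1 n r) = int (2 * Npairs 0 n r)"
    using Npairs_0_eq_one_meeting_formula[of "Suc q" r] Npairs_1_eq_one_meeting_formula[of q r]
    unfolding n by simp
  ultimately show ?thesis by (simp only: of_nat_eq_iff)
qed

end
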